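(* For all $n\in\mathbb N$ the following hold in the $q$-shuffle algebra $\mathbb V$: $$W_{-n}=\sum_{i=0}^n(-1)^iq^i(xC_i)\star\tilde G_{n-i}=\sum_{i=0}^n(-1)^iq^{-i}\tilde G_{n-i}\star(xC_i),$$ $$W_{n+1}=\sum_{i=0}^n(-1)^iq^i\tilde G_{n-i}\star(C_iy)=\sum_{i=0}^n(-1)^iq^{-i}(C_iy)\star\tilde G_{n-i}.$$ Here $xC_i$ and $C_iy$ are concatenation products.
   Context: Let $\mathbb F$ be a field and let $q\in\mathbb F$ be nonzero and not a root of unity. Let $[m]_q=(q^m-q^{-m})/(q-q^{-1})$. Let $\mathbb V$ be the free associative $\mathbb F$-algebra on noncommuting $x,y$, with basis the words (including $1$). Juxtaposition denotes concatenation. Set $\langle x,x\rangle=\langle y,y\rangle=2$ and $\langle x,y\rangle=\langle y,x\rangle=-2$. The $q$-shuffle product $\star$ is the bilinear product determined as follows: - $1\star v=v\star 1=v$; - for nontrivial words $u=u_1\cdots u_r$ and $v=v_1\cdots v_s$, $$u\star v=u_1((u_2\cdots u_r)\star v)+v_1(u\star(v_2\cdots v_s))q^{\langle u_1,v_1\rangle+\cdots+\langle u_r,v_1\rangle}.$$ This makes $\mathbb V$ an associative algebra, the $q$-shuffle algebra. For $k\in\mathbb N$: - $W_{-k}=xyx\cdots x$ is the alternating word of length $2k+1$ beginning and ending with $x$; - $W_{k+1}=yxy\cdots y$ is the alternating word of length $2k+1$ beginning and ending with $y$; - $\tilde G_k=xyxy\cdots xy$ is the word of length $2k$, with $\tilde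 G_0=1$. Let $\overline x=1$ and $\overline y=-1$. A word $v_1\cdots v_m$ is Catalan if $\overline v_1+\cdots+\overline v_i\ge0$ for $1\le i\le m-1$ and $\overline v_1+\cdots+\overline v_m=0$. For $n\in\mathbb N$, $$C_n=\sum v_1\cdots v_{2n}\,[1]_q[1+\overline v_1]_q\cdots[1+\overline v_1+\cdots+\overline v_{2n}]_q,$$ where the sum is over all Catalan words of length $2n$ (so $C_0=1$). *)

theory Defs
  imports Complex_Main "HOL-Library.Poly_Mapping"
begin

datatype letter = X | Y

type_synonym word = "letter list"

type_synonym 'a vV = "word \<Rightarrow>\<^sub>0 'a"

definition wd :: "word \<Rightarrow> 'a::field vV" where
  "wd w = Poly_Mapping.single w 1"

definition scal :: "'a::field \<Rightarrow> 'a vV \<Rightarrow> 'a vV" where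
  "scal c f = Poly_Mapping.map (\<lambda>a. c * a) f"

definition lin_ext :: "(word \<Rightarrow> 'a::field vV) \<Rightarrow> 'a vV \<Rightarrow> 'a vV" where
  "lin_ext F f = (\<Sum>u\<in>Poly_Mapping.keys f. scal (Poly_Mapping.lookup f u) (F u))"

definition cat :: "'a::field vV \<Rightarrow> 'a vV \<Rightarrow> 'a vV" where
  "cat f g = lin_ext (\<lambda>u. lin_ext (\<lambda>v. wd (u @ v)) g) f"

definition pref :: "letter \<Rightarrow> 'a::field vV \<Rightarrow> 'a vV" where
  "pref a f = cat (wd [a]) f"

definition pairing :: "letter \<Rightarrow> letter \<Rightarrow> int" where
  "pairing a b = (if a = b then 2 else -2)"

fun qsh :: "'a::field \<Rightarrow> word \<Rightarrow> word \<Rightarrow> 'a vV" where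
  "qsh q [] v = wd v"
| "qsh q u [] = wd u"
| "qsh q (a # u) (b # v) =
     pref a (qsh q u (b # v))
     + scal (q powi (\<Sum>c\<leftarrow>a # u. pairing c b)) (pref b (qsh q (a # u) v))"

definition star :: "'a::field \<Rightarrow> 'a vV \<Rightarrow> 'a vV \<Rightarrow> 'a vV" where
  "star q f g = lin_ext (\<lambda>u. lin_ext (\<lambda>v. qsh q u v) g) f"

fun alt :: "letter \<Rightarrow> nat \<Rightarrow> word" where
  "alt a 0 = []"
| "alt a (Suc m) = a # alt (if a = X then Y else X) m"

definition Wneg :: "nat \<Rightarrow> 'a::field vV" where   \<comment> \<open>W_{-k}\<close>
  "Wneg k = wd (alt X (2 * k + 1))"

definition Wpos :: "nat \<Rightarrow> 'a::field vV" where   \<comment> \<open>W_{k+1}\<close>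
  "Wpos k = wd (alt Y (2 * k + 1))"

definition Gt :: "nat \<Rightarrow> 'a::field vV" where
  "Gt k = wd (alt X (2 * k))"

definition qint :: "'a::field \<Rightarrow> int \<Rightarrow> 'a" where
  "qint q m = (q powi m - q powi (- m)) / (q - inverse q)"

definition lval :: "letter \<Rightarrow> int" where
  "lval a = (if a = X then 1 else -1)"

definition catalan_word :: "word \<Rightarrow> bool" where
  "catalan_word w \<longleftrightarrow>
     (\<forall>i. 1 \<le> i \<and> i \<le> length w - 1 \<longrightarrow> (\<Sum>j<i. lval (w ! j)) \<ge> 0)
     \<and> (\<Sum>j<length w. lval (w ! j)) = 0"

definition Cat :: "'a::field \<Rightarrow> nat \<Rightarrow> 'a vV" where
  "Cat q n = (\<Sum>w\<in>{w. length w = 2 * n \<and> catalan_word w}.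
      scal (\<Prod>i\<le>2 * n. qint q (1 + (\<Sum>j<i. lval (w ! j)))) (wd w))"

end

theory Submission
  imports Defs
begin

text \<open>Write \<open>\<partial>\<^sub>a\<close> for the left derivative that removes a leading letter \<open>a\<close>.  An element
  of \<open>V\<close> is determined by its constant term together with its derivatives \<open>\<partial>\<^sub>x\<close> and \<open>\<partial>\<^sub>y\<close>,
  and each \<open>\<partial>\<^sub>a\<close> is a twisted derivation of the q-shuffle product,
  \<open>\<partial>\<^sub>a (u \<star> v) = \<partial>\<^sub>a u \<star> v + q\<^bsup>\<langle>u,a\<rangle>\<^esup> u \<star> \<partial>\<^sub>a v\<close>.  The Catalan elements \<open>C\<^sub>j\<close> sit in a
  family \<open>CatH h j\<close> of weighted lattice paths from height \<open>h\<close> down to \<open>0\<close> that is closed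
  under both derivatives, so the first identity follows by induction on \<open>n\<close>, comparing
  derivatives.  The auxiliary identity this requires, between the products of the \<open>CatH h j\<close>
  with the \<open>G\<close>'s and with the \<open>W\<close>'s, is proved the same way by a double induction; the
  q-integers enter only through \<open>[m + 1] = q\<^sup>m + q\<^sup>-\<^sup>1 [m] = q\<^sup>-\<^sup>m + q [m]\<close>.
  The other three identities follow by symmetry: reversing words and exchanging \<open>x\<close> and \<open>y\<close>
  is an antiautomorphism of the q-shuffle algebra which fixes every \<open>G\<^sub>k\<close> and \<open>C\<^sub>n\<close> and maps
  \<open>W\<^sub>-\<^sub>n\<close> to \<open>W\<^sub>n\<^sub>+\<^sub>1\<close>, and \<open>u \<star>\<^sub>q v = v \<star>\<^bsub>1/q\<^esub> u\<close> whenever \<open>v\<close> is a combination of words of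
  height \<open>0\<close>, such as \<open>G\<^sub>k\<close>.\<close>

abbreviation lookup :: "('b \<Rightarrow>\<^sub>0 'c::zero) \<Rightarrow> 'b \<Rightarrow> 'c" where
  "lookup \<equiv> Poly_Mapping.lookup"

abbreviation keys :: "('b \<Rightarrow>\<^sub>0 'c::zero) \<Rightarrow> 'b set" where
  "keys \<equiv> Poly_Mapping.keys"

lemma lookup_scal [simp]: "lookup (scal c f) w = c * lookup f w"
  unfolding scal_def by transfer (simp add: when_def)

interpretation vV: module "scal :: 'a::field \<Rightarrow> 'a vV \<Rightarrow> 'a vV"
  by standard (rule poly_mapping_eqI; simp add: lookup_add algebra_simps)+

lemma lookup_wd: "lookup (wd w) v = (if v = w then 1 else 0)"
  unfolding wd_def by (simp add: lookup_single when_def)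

lemma keys_wd [simp]: "keys (wd w :: 'a::field vV) = {w}"
  unfolding wd_def by simp

lemma lookup_sum_keys_delta:
  "(\<Sum>u\<in>keys f. lookup f u * (if u = w then c else 0)) = lookup f w * (c :: 'a::field)"
  by (simp add: if_distrib[of "(*) _"] sum.delta' in_keys_iff cong: if_cong)

lemma lookup_sum_scal_wd:
  assumes "finite S"
  shows "lookup (\<Sum>w\<in>S. scal (c w) (wd w)) v = (if v \<in> S then c v else (0 :: 'a::field))"
  using assms by (simp add: lookup_sum lookup_wd if_distrib[of "(*) _"] sum.delta cong: if_cong)

lemma lookup_lin_ext: "lookup (lin_ext F f) w = (\<Sum>u\<in>keys f. lookup f u * lookup (F u) w)"
  unfolding lin_ext_def by (simp add: lookup_sum)

lemma lin_ext_eq_sum: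
  assumes "finite S" "keys f \<subseteq> S"
  shows "lin_ext F f = (\<Sum>u\<in>S. scal (lookup f u) (F u))"
  unfolding lin_ext_def
  by (rule sum.mono_neutral_left) (use assms in \<open>auto simp: in_keys_iff\<close>)

lemma additive_lin_ext: "additive (lin_ext F)"
proof
  fix f g :: "'a::field vV"
  have "keys (f + g) \<subseteq> keys f \<union> keys g"
    by (rule keys_add)
  then show "lin_ext F (f + g) = lin_ext F f + lin_ext F g"
    by (simp add: lin_ext_eq_sum[of "keys f \<union> keys g"] lookup_add vV.scale_left_distrib
        sum.distrib)
qed

lemmas lin_ext_add [simp] = additive.add[OF additive_lin_ext]
  and lin_ext_zero [simp] = additive.zero[OF additive_lin_ext]
  and lin_ext_sum [simp] = additive.sum[OF additive_lin_ext]

lemma lin_ext_scal [simp]: "lin_ext F (scal c f) = scal c (lin_ext F f)"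
proof -
  have "keys (scal c f) \<subseteq> keys f"
    by (auto simp: in_keys_iff)
  then show ?thesis
    by (simp add: lin_ext_eq_sum[of "keys f"] vV.scale_sum_right)
qed

lemma lin_ext_wd [simp]: "lin_ext F (wd w) = F w"
  by (simp add: lin_ext_def wd_def)

lemma lin_ext_cong: "(\<And>u. u \<in> keys f \<Longrightarrow> F u = G u) \<Longrightarrow> lin_ext F f = lin_ext G f"
  by (simp add: lin_ext_def)

lemma lin_ext_add_fun: "lin_ext (\<lambda>u. F u + G u) f = lin_ext F f + lin_ext G f"
  by (simp add: lin_ext_def vV.scale_right_distrib sum.distrib)

lemma lin_ext_scal_fun: "lin_ext (\<lambda>u. scal c (F u)) f = scal c (lin_ext F f)"
  by (simp add: lin_ext_def vV.scale_sum_right mult.commute)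

lemma lin_ext_zero_fun [simp]: "lin_ext (\<lambda>u. 0) f = 0"
  by (simp add: lin_ext_def)

lemma lin_ext_wd_id [simp]: "lin_ext wd f = f"
  by (rule poly_mapping_eqI)
    (simp add: lookup_lin_ext lookup_wd if_distrib[of "(*) _"] sum.delta in_keys_iff cong: if_cong)

lemma lin_ext_lin_ext: "lin_ext F (lin_ext G f) = lin_ext (\<lambda>u. lin_ext F (G u)) f"
  by (simp add: lin_ext_def[of G]) (simp add: lin_ext_def)

lemma lin_ext_swap:
  "lin_ext (\<lambda>u. lin_ext (\<lambda>v. H u v) g) f = lin_ext (\<lambda>v. lin_ext (\<lambda>u. H u v) f) g"
proof -
  have "lin_ext (\<lambda>u. lin_ext (\<lambda>v. H u v) g) f
      = (\<Sum>u\<in>keys f. \<Sum>v\<in>keys g. scal (lookup f u * lookup g v) (H u v))"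
    by (simp add: lin_ext_def vV.scale_sum_right)
  also have "\<dots> = (\<Sum>v\<in>keys g. \<Sum>u\<in>keys f. scal (lookup g v * lookup f u) (H u v))"
    by (subst sum.swap) (simp add: mult.commute)
  finally show ?thesis
    by (simp add: lin_ext_def vV.scale_sum_right)
qed

section \<open>Left derivatives and concatenation\<close>

definition lder :: "letter \<Rightarrow> 'a::field vV \<Rightarrow> 'a vV" where
  "lder a = lin_ext (\<lambda>u. case u of [] \<Rightarrow> 0 | b # v \<Rightarrow> if b = a then wd v else 0)"

lemma lookup_lder [simp]: "lookup (lder a f) w = lookup f (a # w)"
proof -
  have "lookup (case u of [] \<Rightarrow> 0 | b # v \<Rightarrow> if b = a then wd v else 0) w
      = (if u = a # w then 1 else (0 :: 'a))" for u
    by (auto simp: lookup_wd split: list.split)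
  then show ?thesis
    by (simp add: lder_def lookup_lin_ext lookup_sum_keys_delta)
qed

lemma additive_lder: "additive (lder a)"
  unfolding lder_def by (rule additive_lin_ext)

lemmas lder_add [simp] = additive.add[OF additive_lder]
  and lder_zero [simp] = additive.zero[OF additive_lder]
  and lder_sum [simp] = additive.sum[OF additive_lder]

lemma lder_scal [simp]: "lder a (scal c f) = scal c (lder a f)"
  by (simp add: lder_def)

lemma lder_wd_Nil [simp]: "lder a (wd [] :: 'a::field vV) = 0"
  and lder_wd_Cons [simp]: "lder a (wd (b # w) :: 'a::field vV) = (if b = a then wd w else 0)"
  by (simp_all add: lder_def)

lemma lder_lin_ext: "lder a (lin_ext F f) = lin_ext (\<lambda>u. lder a (F u)) f"
  by (simp add: lder_def lin_ext_lin_ext)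

lemma vV_eqI_lder:
  fixes f g :: "'a::field vV"
  assumes "lookup f [] = lookup g []" "lder X f = lder X g" "lder Y f = lder Y g"
  shows "f = g"
proof (rule poly_mapping_eqI)
  fix w
  show "lookup f w = lookup g w"
  proof (cases w)
    case (Cons a v)
    have "lookup (lder a f) v = lookup (lder a g) v"
      using assms by (cases a) auto
    then show ?thesis
      using Cons by simp
  qed (use assms in simp)
qed

lemma cat_wd_wd [simp]: "cat (wd u) (wd v) = (wd (u @ v) :: 'a::field vV)"
  by (simp add: cat_def)

lemma cat_assoc: "cat (cat f g) h = cat f (cat g (h :: 'a::field vV))"
  by (simp add: cat_def lin_ext_lin_ext)

lemma additive_cat_left: "additive (\<lambda>f. cat f g)"
  unfolding cat_def by (rule additive_lin_ext)

lemma cat_scal_left [simp]: "cat (scal c f) g = scal c (cat f g)"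
  by (simp add: cat_def)

lemma cat_scal_right [simp]: "cat f (scal c g) = scal c (cat f g)"
  by (simp add: cat_def lin_ext_scal_fun)

lemmas cat_add_left [simp] = additive.add[OF additive_cat_left]

lemma cat_add_right [simp]: "cat f (g + h) = cat f g + cat f h"
  by (simp add: cat_def lin_ext_add_fun)

lemma pref_eq_lin_ext: "pref a f = lin_ext (\<lambda>v. wd (a # v)) f"
  by (simp add: pref_def cat_def)

lemma pref_wd [simp]: "pref a (wd w) = wd (a # w)"
  by (simp add: pref_def)

lemma pref_scal [simp]: "pref a (scal c f) = scal c (pref a f)"
  and pref_add [simp]: "pref a (f + g) = pref a f + pref a g"
  by (simp_all add: pref_def)

lemma cat_pref_left [simp]: "cat (pref a f) g = pref a (cat f g)"
  by (simp add: pref_def cat_assoc)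

lemma lder_pref [simp]: "lder a (pref b f) = (if b = a then f else 0)"
  by (simp add: pref_eq_lin_ext lder_lin_ext cong: if_cong)

lemma lookup_pref_Nil [simp]: "lookup (pref a f) [] = 0"
  by (simp add: pref_eq_lin_ext lookup_lin_ext lookup_wd)

lemma keys_pref: "keys (pref a f) = Cons a ` keys f"
proof -
  have "lookup (pref a f) (b # w) = (if b = a then lookup f w else 0)" for b w
    using lookup_lder[of b "pref a f" w] by (auto simp del: lookup_lder)
  then have "u \<in> keys (pref a f) \<longleftrightarrow> u \<in> Cons a ` keys f" for u
    by (cases u) (auto simp: in_keys_iff)
  then show ?thesis
    by blast
qed

lemma qsh_Nil_right [simp]: "qsh q u [] = wd u"
  by (cases u) auto

lemma star_wd_wd [simp]: "star q (wd u) (wd v) = qsh q u v"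
  by (simp add: star_def)

lemma star_Nil_left [simp]: "star q (wd []) g = g"
proof -
  have "qsh q [] = wd"
    by (rule ext) simp
  then show ?thesis
    by (simp add: star_def)
qed

lemma star_Nil_right [simp]: "star q f (wd []) = f"
  by (simp add: star_def)

lemma additive_star_left: "additive (\<lambda>f. star q f g)"
  unfolding star_def by (rule additive_lin_ext)

lemma additive_star_right: "additive (star q f)"
  by standard (simp add: star_def lin_ext_add_fun)

lemmas star_add_left [simp] = additive.add[OF additive_star_left]
  and star_zero_left [simp] = additive.zero[OF additive_star_left]
  and star_sum_left [simp] = additive.sum[OF additive_star_left]
  and star_add_right [simp] = additive.add[OF additive_star_right]
  and star_zero_right [simp] = additive.zero[OF additive_star_right]
  and star_sum_right [simp] = additive.sum[OF additive_star_right]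

lemma star_scal_left [simp]: "star q (scal c f) g = scal c (star q f g)"
  by (simp add: star_def)

lemma star_scal_right [simp]: "star q f (scal c g) = scal c (star q f g)"
  by (simp add: star_def lin_ext_scal_fun)

definition height :: "word \<Rightarrow> int" where
  "height w = (\<Sum>c\<leftarrow>w. lval c)"

lemma height_Nil [simp]: "height [] = 0"
  and height_Cons [simp]: "height (a # w) = lval a + height w"
  and height_append [simp]: "height (u @ v) = height u + height v"
  by (simp_all add: height_def)

lemma lval_X [simp]: "lval X = 1"
  and lval_Y [simp]: "lval Y = -1"
  by (simp_all add: lval_def)

lemma pairing_eq_lval: "pairing c a = 2 * lval c * lval a"
  by (cases c; cases a) (simp_all add: pairing_def)

lemma sum_pairing_eq_height: "(\<Sum>c\<leftarrow>u. pairing c a) = 2 * height u * lval a"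
  by (induction u) (simp_all add: pairing_eq_lval algebra_simps)

lemma qsh_Cons_Cons [simp]:
  "qsh q (a # u) (b # v) =
     pref a (qsh q u (b # v)) + scal (q powi (2 * height (a # u) * lval b)) (pref b (qsh q (a # u) v))"
  by (simp only: qsh.simps sum_pairing_eq_height)

declare qsh.simps(3) [simp del]

lemma lder_qsh:
  "lder a (qsh q u v) =
     (case u of [] \<Rightarrow> 0 | b # u' \<Rightarrow> if b = a then qsh q u' v else 0)
     + scal (q powi (2 * height u * lval a))
         (case v of [] \<Rightarrow> 0 | b # v' \<Rightarrow> if b = a then qsh q u v' else 0)"
  by (cases u; cases v) simp_all

lemma lder_star:
  assumes "\<And>u. u \<in> keys f \<Longrightarrow> height u = h"
  shows "lder a (star q f g) = star q (lder a f) g + scal (q powi (2 * h * lval a)) (star q f (lder a g))"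
proof -
  have "lder a (star q f g) = lin_ext (\<lambda>u. lin_ext (\<lambda>v. lder a (qsh q u v)) g) f"
    by (simp add: star_def lder_lin_ext)
  also have "\<dots> = lin_ext (\<lambda>u. lin_ext (\<lambda>v. case u of [] \<Rightarrow> 0 | b # u' \<Rightarrow> if b = a then qsh q u' v else 0) g) f
      + scal (q powi (2 * h * lval a))
          (lin_ext (\<lambda>u. lin_ext (\<lambda>v. case v of [] \<Rightarrow> 0 | b # v' \<Rightarrow> if b = a then qsh q u v' else 0) g) f)"
    by (simp add: lder_qsh lin_ext_add_fun lin_ext_scal_fun[symmetric] assms cong: lin_ext_cong)
  also have "lin_ext (\<lambda>u. lin_ext (\<lambda>v. case u of [] \<Rightarrow> 0 | b # u' \<Rightarrow> if b = a then qsh q u' v else 0) g) f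
      = star q (lder a f) g"
    unfolding star_def lder_def lin_ext_lin_ext
    by (rule lin_ext_cong) (simp split: list.split)
  also have "lin_ext (\<lambda>u. lin_ext (\<lambda>v. case v of [] \<Rightarrow> 0 | b # v' \<Rightarrow> if b = a then qsh q u v' else 0) g) f
      = star q f (lder a g)"
    unfolding star_def lder_def lin_ext_lin_ext
    by (rule lin_ext_cong, rule lin_ext_cong) (simp split: list.split)
  finally show ?thesis .
qed

lemma lookup_qsh_Nil: "lookup (qsh q u v) [] = (if u = [] \<and> v = [] then 1 else 0)"
  by (cases u; cases v) (simp_all add: lookup_wd lookup_add)

lemma lookup_star_Nil: "lookup (star q f g) [] = lookup f [] * lookup g []"
proof -
  have "lookup (lin_ext (\<lambda>v. qsh q u v) g) [] = (if u = [] then lookup g [] else 0)" for u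
    by (simp add: lookup_lin_ext lookup_qsh_Nil lookup_sum_keys_delta cong: if_cong)
  then show ?thesis
    by (simp add: star_def lookup_lin_ext lookup_sum_keys_delta cong: if_cong)
qed

lemma qsh_commute_inverse:
  fixes q :: "'a::field"
  shows "q \<noteq> 0 \<Longrightarrow> qsh q u v = scal (q powi (2 * height u * height v)) (qsh (inverse q) v u)"
proof (induction q u v rule: qsh.induct)
  case (3 q a u b v)
  have "q powi (2 * height u * height (b # v))
      = q powi (2 * height (a # u) * height (b # v)) * inverse q powi (2 * height (b # v) * lval a)"
  proof -
    have "2 * height u * height (b # v) = 2 * height (a # u) * height (b # v) - 2 * height (b # v) * lval a"
      by (simp add: algebra_simps)
    then show ?thesis
      using "3.prems" by (simp add: power_int_diff power_int_inverse divide_inverse)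
  qed
  moreover have "q powi (2 * height (a # u) * lval b) * q powi (2 * height (a # u) * height v)
      = q powi (2 * height (a # u) * height (b # v))"
    using "3.prems" by (simp add: power_int_add[symmetric] algebra_simps)
  ultimately show ?case
    using "3.IH" "3.prems" by (simp add: vV.scale_right_distrib add.commute)
qed simp_all

lemma star_commute_inverse:
  fixes q :: "'a::field"
  assumes "q \<noteq> 0"
    and "\<And>u v. u \<in> keys f \<Longrightarrow> v \<in> keys g \<Longrightarrow> 2 * height u * height v = k"
  shows "star q f g = scal (q powi k) (star (inverse q) g f)"
proof -
  have "star q f g = lin_ext (\<lambda>u. lin_ext (\<lambda>v. scal (q powi k) (qsh (inverse q) v u)) g) f"
    unfolding star_def
    by (rule lin_ext_cong, rule lin_ext_cong) (simp add: qsh_commute_inverse[OF assms(1)] assms)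
  also have "\<dots> = scal (q powi k) (lin_ext (\<lambda>v. lin_ext (\<lambda>u. qsh (inverse q) v u) f) g)"
    by (simp add: lin_ext_scal_fun lin_ext_swap[of "\<lambda>u v. qsh (inverse q) v u" g f])
  finally show ?thesis
    by (simp add: star_def)
qed

section \<open>Reversal of words\<close>

text \<open>The counterpart, for last letters, of the recursion defining \<open>qsh\<close>.\<close>

lemma qsh_snoc_snoc:
  fixes q :: "'a::field"
  assumes "q \<noteq> 0"
  shows "qsh q (u @ [c]) (v @ [d]) =
    scal (q powi (2 * lval c * height (v @ [d]))) (cat (qsh q u (v @ [d])) (wd [c]))
    + cat (qsh q (u @ [c]) v) (wd [d])"
proof (induction u arbitrary: v)
  case Nil
  show ?case
  proof (induction v)
    case (Cons b v)
    have "q powi (2 * lval c * height (b # v @ [d]))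
        = q powi (2 * height [c] * lval b) * q powi (2 * lval c * height (v @ [d]))"
      using assms by (simp add: power_int_add[symmetric] algebra_simps)
    with Cons.IH show ?case
      by (simp add: vV.scale_right_distrib)
  qed simp
next
  case (Cons a u)
  note IH = Cons.IH
  show ?case
  proof (induction v)
    case Nil
    have "q powi (2 * height (a # u @ [c]) * lval d)
        = q powi (2 * lval c * lval d) * q powi (2 * height (a # u) * lval d)"
      using assms by (simp add: power_int_add[symmetric] algebra_simps)
    with IH[of "[]"] show ?case
      by (simp add: vV.scale_right_distrib)
  next
    case (Cons b v)
    have "q powi (2 * height (a # u @ [c]) * lval b) * q powi (2 * lval c * height (v @ [d]))
        = q powi (2 * lval c * height (b # v @ [d])) * q powi (2 * height (a # u) * lval b)"
      using assms by (simp add: power_int_add[symmetric] algebra_simps)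
    with IH[of "b # v"] Cons.IH show ?case
      by (simp add: vV.scale_right_distrib)
  qed
qed

fun flip :: "letter \<Rightarrow> letter" where
  "flip X = Y"
| "flip Y = X"

lemma flip_flip [simp]: "flip (flip a) = a"
  by (cases a) simp_all

lemma lval_flip [simp]: "lval (flip a) = - lval a"
  by (cases a) simp_all

definition mirror :: "word \<Rightarrow> word" where
  "mirror w = rev (map flip w)"

lemma mirror_Nil [simp]: "mirror [] = []"
  and mirror_Cons [simp]: "mirror (a # w) = mirror w @ [flip a]"
  and mirror_append [simp]: "mirror (u @ v) = mirror v @ mirror u"
  by (simp_all add: mirror_def)

lemma mirror_mirror [simp]: "mirror (mirror w) = w"
  by (simp add: mirror_def rev_map comp_def)

lemma inj_mirror: "inj mirror"
  by (metis injI mirror_mirror)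

lemma length_mirror [simp]: "length (mirror w) = length w"
  by (simp add: mirror_def)

lemma height_mirror [simp]: "height (mirror w) = - height w"
  by (induction w) simp_all

definition mirrorV :: "'a::field vV \<Rightarrow> 'a vV" where
  "mirrorV = lin_ext (\<lambda>w. wd (mirror w))"

lemma mirrorV_wd [simp]: "mirrorV (wd w) = wd (mirror w)"
  by (simp add: mirrorV_def)

lemma additive_mirrorV: "additive mirrorV"
  unfolding mirrorV_def by (rule additive_lin_ext)

lemmas mirrorV_add [simp] = additive.add[OF additive_mirrorV]
  and mirrorV_sum [simp] = additive.sum[OF additive_mirrorV]

lemma mirrorV_scal [simp]: "mirrorV (scal c f) = scal c (mirrorV f)"
  by (simp add: mirrorV_def)

lemma mirrorV_lin_ext: "mirrorV (lin_ext F f) = lin_ext (\<lambda>u. mirrorV (F u)) f"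
  by (simp add: mirrorV_def lin_ext_lin_ext)

lemma lin_ext_mirrorV: "lin_ext F (mirrorV f) = lin_ext (\<lambda>u. F (mirror u)) f"
  by (simp add: mirrorV_def lin_ext_lin_ext)

lemma mirrorV_cat: "mirrorV (cat f g) = cat (mirrorV g) (mirrorV f)"
proof -
  have "mirrorV (cat f g) = lin_ext (\<lambda>u. lin_ext (\<lambda>v. wd (mirror v @ mirror u)) g) f"
    by (simp add: cat_def mirrorV_lin_ext)
  also have "\<dots> = lin_ext (\<lambda>v. lin_ext (\<lambda>u. wd (mirror v @ mirror u)) f) g"
    by (rule lin_ext_swap)
  finally show ?thesis
    by (simp add: cat_def lin_ext_mirrorV)
qed

lemma mirrorV_pref: "mirrorV (pref a f) = cat (mirrorV f) (wd [flip a])"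
  by (simp add: pref_def mirrorV_cat)

lemma mirrorV_qsh:
  fixes q :: "'a::field"
  shows "q \<noteq> 0 \<Longrightarrow> mirrorV (qsh q u v) = qsh q (mirror v) (mirror u)"
proof (induction q u v rule: qsh.induct)
  case (3 q a u b v)
  have "2 * lval (flip b) * height (mirror u @ [flip a]) = 2 * height (a # u) * lval b"
    by (simp add: algebra_simps)
  with "3.IH" "3.prems" show ?case
    by (simp add: mirrorV_pref qsh_snoc_snoc add.commute)
qed simp_all

lemma mirrorV_star:
  fixes q :: "'a::field"
  assumes "q \<noteq> 0"
  shows "mirrorV (star q f g) = star q (mirrorV g) (mirrorV f)"
proof -
  have "mirrorV (star q f g) = lin_ext (\<lambda>u. lin_ext (\<lambda>v. qsh q (mirror v) (mirror u)) g) f"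
    by (simp add: star_def mirrorV_lin_ext mirrorV_qsh[OF assms])
  also have "\<dots> = lin_ext (\<lambda>v. lin_ext (\<lambda>u. qsh q (mirror v) (mirror u)) f) g"
    by (rule lin_ext_swap)
  finally show ?thesis
    by (simp add: star_def lin_ext_mirrorV)
qed

lemma alt_Suc: "alt a (Suc m) = a # alt (flip a) m"
  by (cases a) simp_all

declare alt.simps(2) [simp del]

lemma alt_Suc_snoc: "alt a (Suc m) = alt a m @ [if even m then a else flip a]"
proof (induction m arbitrary: a)
  case (Suc m)
  have "alt a (Suc (Suc m)) = a # alt (flip a) m @ [if even m then flip a else a]"
    by (simp add: alt_Suc[of a "Suc m"] Suc.IH)
  then show ?case
    by (simp add: alt_Suc[of a m])
qed (simp add: alt_Suc)

lemma mirror_alt: "mirror (alt a m) = alt (if even m then a else flip a) m"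
proof (induction m arbitrary: a)
  case (Suc m)
  have "mirror (alt a (Suc m)) = alt (if even m then flip a else a) m @ [flip a]"
    by (simp add: alt_Suc Suc.IH)
  then show ?case
    by (simp add: alt_Suc_snoc)
qed simp

lemma height_alt: "height (alt a m) = (if even m then 0 else lval a)"
  by (induction m arbitrary: a) (simp_all add: alt_Suc)

lemma mirrorV_Gt [simp]: "mirrorV (Gt m) = Gt m"
  by (simp add: Gt_def mirror_alt)

lemma mirrorV_Wneg [simp]: "mirrorV (Wneg m) = Wpos m"
  by (simp add: Wneg_def Wpos_def mirror_alt)

lemma height_keys_Gt: "u \<in> keys (Gt m) \<Longrightarrow> height u = 0"
  by (simp add: Gt_def height_alt)

lemma lookup_Gt_Nil: "lookup (Gt m) [] = (if m = 0 then 1 else 0)"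
  by (cases m) (simp_all add: Gt_def lookup_wd alt_Suc)

lemma lookup_Wpos_Nil [simp]: "lookup (Wpos m) [] = 0"
  by (simp add: Wpos_def lookup_wd alt_Suc)

lemma lder_X_Gt: "lder X (Gt m) = (if m = 0 then 0 else Wpos (m - 1))"
  by (cases m) (simp_all add: Gt_def Wpos_def alt_Suc)

lemma lder_Y_Gt [simp]: "lder Y (Gt m) = 0"
  by (cases m) (simp_all add: Gt_def alt_Suc)

lemma lder_X_Wpos [simp]: "lder X (Wpos m) = 0"
  and lder_Y_Wpos [simp]: "lder Y (Wpos m) = Gt m"
  by (simp_all add: Wpos_def Gt_def alt_Suc)

lemma Wneg_0: "Wneg 0 = wd [X]"
  by (simp add: Wneg_def alt_Suc)

lemma Wneg_Suc: "Wneg (Suc m) = pref X (pref Y (Wneg m))"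
  by (simp add: Wneg_def alt_Suc)

section \<open>Weighted lattice paths and Catalan elements\<close>

lemma qint_1:
  assumes "q \<noteq> 0" "q * q \<noteq> 1"
  shows "qint q 1 = 1"
proof -
  have "q - inverse q \<noteq> 0"
    using assms by (auto simp: field_simps)
  then show ?thesis
    by (simp add: qint_def)
qed

lemma qint_add_1:
  assumes "q \<noteq> 0" "q * q \<noteq> 1"
  shows "qint q (m + 1) = q powi m + inverse q * qint q m"
    and "qint q (m + 1) = q powi (- m) + q * qint q m"
proof -
  define t where "t = q powi m"
  have t: "q powi (m + 1) = t * q" "q powi (- (m + 1)) = inverse t * inverse q"
    "q powi (- m) = inverse t" "t \<noteq> 0"
    using assms by (simp_all add: t_def power_int_add power_int_minus power_int_diff divide_inverse)
  have "q - inverse q \<noteq> 0"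
    using assms by (auto simp: field_simps)
  then show "qint q (m + 1) = q powi m + inverse q * qint q m"
    and "qint q (m + 1) = q powi (- m) + q * qint q m"
    unfolding qint_def t(1-3) t_def[symmetric] using assms t(4) by (simp_all add: field_simps)
qed

lemma qint_Suc_nat:
  assumes "q \<noteq> 0" "q * q \<noteq> 1"
  shows "qint q (int n + 1) = q ^ n + inverse q * qint q (int n)"
    and "qint q (int n + 1) = inverse (q ^ n) + q * qint q (int n)"
  using qint_add_1[OF assms, of "int n"] by (simp_all add: power_int_minus)

lemma qint_inverse: "qint (inverse q) m = qint q m"
proof (cases "q = 0")
  case False
  then show ?thesis
    unfolding qint_def
    by (simp add: power_int_inverse power_int_minus divide_inverse)
      (simp add: field_simps, metis minus_diff_eq minus_divide_divide)
qed (simp add: qint_def)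

lemma finite_words_of_length: "finite {w :: word. length w = m}"
proof -
  have "(UNIV :: letter set) = {X, Y}"
    using letter.exhaust by auto
  then have "finite (UNIV :: letter set)"
    by (metis finite.emptyI finite.insertI)
  then show ?thesis
    using finite_lists_length_eq[of "UNIV :: letter set" m] by simp
qed

fun path_weight :: "'a::field \<Rightarrow> int \<Rightarrow> word \<Rightarrow> 'a" where
  "path_weight q h [] = (if h = 0 then 1 else 0)"
| "path_weight q h (a # w) =
     (if h + lval a < 0 then 0 else qint q (1 + h + lval a) * path_weight q (h + lval a) w)"

definition path_sum :: "'a::field \<Rightarrow> int \<Rightarrow> nat \<Rightarrow> 'a vV" where
  "path_sum q h m = (\<Sum>w\<in>{w. length w = m}. scal (path_weight q h w) (wd w))"

lemma lookup_path_sum: "lookup (path_sum q h m) w = (if length w = m then path_weight q h w else 0)"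
  by (simp add: path_sum_def lookup_sum_scal_wd finite_words_of_length)

lemma path_weight_eq_0_if_short: "int (length w) < h \<Longrightarrow> path_weight q h w = 0"
proof (induction w arbitrary: h)
  case (Cons a w)
  have "int (length w) < h + lval a"
    using Cons.prems by (cases a) simp_all
  then show ?case
    using Cons.IH by simp
qed simp

lemma height_if_path_weight_nonzero: "path_weight q h w \<noteq> 0 \<Longrightarrow> h + height w = 0"
proof (induction w arbitrary: h)
  case (Cons a w)
  then have "path_weight q (h + lval a) w \<noteq> 0"
    by (simp split: if_splits)
  then show ?case
    using Cons.IH by fastforce
qed (simp split: if_splits)

lemma lder_path_sum_0: "lder a (path_sum q h 0) = 0"
  by (rule poly_mapping_eqI) (simp add: lookup_path_sum)

lemma lder_path_sum_Suc:
  "lder a (path_sum q h (Suc m)) =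
     scal (if h + lval a < 0 then 0 else qint q (1 + h + lval a)) (path_sum q (h + lval a) m)"
  by (rule poly_mapping_eqI) (simp add: lookup_path_sum)

text \<open>Words of length \<open>2 * j + h\<close>, read as lattice paths from height \<open>h\<close> down to \<open>0\<close> (the
  weight vanishes on all other words).  \<open>CatH q 0 j\<close> is \<open>C\<^sub>j\<close>, and unlike the \<open>C\<^sub>j\<close> alone the
  family is closed under left derivatives.\<close>

definition CatH :: "'a::field \<Rightarrow> nat \<Rightarrow> nat \<Rightarrow> 'a vV" where
  "CatH q h j = path_sum q (int h) (2 * j + h)"

lemma CatH_0_0 [simp]: "CatH q 0 0 = wd []"
  by (rule poly_mapping_eqI) (simp add: CatH_def lookup_path_sum lookup_wd)

lemma lookup_CatH_Nil: "lookup (CatH q h j) [] = (if h = 0 \<and> j = 0 then 1 else 0)"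
  by (simp add: CatH_def lookup_path_sum)

lemma height_keys_CatH: "u \<in> keys (CatH q h j) \<Longrightarrow> height u = - int h"
  using height_if_path_weight_nonzero[of q "int h" u]
  by (auto simp: in_keys_iff CatH_def lookup_path_sum split: if_splits)

lemma lder_X_CatH:
  "lder X (CatH q h j) = (if j = 0 then 0 else scal (qint q (int h + 2)) (CatH q (Suc h) (j - 1)))"
proof (cases j)
  case 0
  have "path_sum q (int h + 1) (h - 1) = (0 :: 'a vV)" if "h > 0"
    by (rule poly_mapping_eqI) (use that in \<open>simp add: lookup_path_sum path_weight_eq_0_if_short\<close>)
  with 0 show ?thesis
    by (cases h) (simp_all add: CatH_def lder_path_sum_0 lder_path_sum_Suc)
next
  case (Suc i)
  then show ?thesis
    by (simp add: CatH_def lder_path_sum_Suc add_ac)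
qed

lemma lder_Y_CatH:
  "lder Y (CatH q h j) = (if h = 0 then 0 else scal (qint q (int h)) (CatH q (h - 1) j))"
proof (cases h)
  case 0
  then show ?thesis
    by (cases j) (simp_all add: CatH_def lder_path_sum_0 lder_path_sum_Suc)
next
  case (Suc k)
  then show ?thesis
    by (simp add: CatH_def lder_path_sum_Suc add_ac)
qed

definition prefix_height :: "nat \<Rightarrow> word \<Rightarrow> int" where
  "prefix_height i w = (\<Sum>j<i. lval (w ! j))"

lemma prefix_height_0 [simp]: "prefix_height 0 w = 0"
  by (simp add: prefix_height_def)

lemma prefix_height_Suc_Cons [simp]: "prefix_height (Suc i) (a # w) = lval a + prefix_height i w"
  by (simp only: prefix_height_def sum.lessThan_Suc_shift) simp

lemma prefix_height_eq_height_take: "i \<le> length w \<Longrightarrow> prefix_height i w = height (take i w)"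
proof (induction w arbitrary: i)
  case (Cons a w)
  then show ?case
    by (cases i) auto
qed simp

lemma catalan_word_iff: "catalan_word w \<longleftrightarrow> (\<forall>i\<le>length w. 0 \<le> prefix_height i w) \<and> height w = 0"
proof -
  have total: "prefix_height (length w) w = height w"
    by (simp add: prefix_height_eq_height_take)
  have "0 \<le> prefix_height i w"
    if inner: "\<forall>i. 1 \<le> i \<and> i \<le> length w - 1 \<longrightarrow> 0 \<le> prefix_height i w"
      and "height w = 0" "i \<le> length w" for i
    using inner[rule_format, of i] that total by (cases "i = 0 \<or> i = length w") auto
  then show ?thesis
    unfolding catalan_word_def prefix_height_def[symmetric] total by auto
qed

lemma path_weight_eq:
  assumes "0 \<le> h"
  shows "path_weight q h w =
    (if (\<forall>i\<le>length w. 0 \<le> h + prefix_height i w) \<and> h + height w = 0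
     then \<Prod>i\<in>{1..length w}. qint q (1 + h + prefix_height i w) else 0)"
  using assms
proof (induction w arbitrary: h)
  case (Cons a w)
  let ?h = "h + lval a"
  show ?case
  proof (cases "?h < 0")
    case True
    then have "\<not> 0 \<le> h + prefix_height (Suc 0) (a # w)"
      by simp
    with True show ?thesis
      by (auto simp del: prefix_height_Suc_Cons)
  next
    case False
    have all: "(\<forall>i\<le>length (a # w). 0 \<le> h + prefix_height i (a # w))
        \<longleftrightarrow> (\<forall>i\<le>length w. 0 \<le> ?h + prefix_height i w)"
      using Cons.prems False
      by (simp only: length_Cons less_Suc_eq_le[symmetric] All_less_Suc2) (simp add: add.assoc)
    have prod: "(\<Prod>i\<in>{1..length (a # w)}. qint q (1 + h + prefix_height i (a # w)))
        = qint q (1 + ?h) * (\<Prod>i\<in>{1..length w}. qint q (1 + ?h + prefix_height i w))"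
      by (simp add: prod.atLeast_Suc_atMost[of 0] prod.atLeast_Suc_atMost_Suc_shift add.assoc
          del: prod.cl_ivl_Suc)
    have "path_weight q h (a # w) = qint q (1 + ?h) * path_weight q ?h w"
      using False by (simp add: add.assoc)
    also have "\<dots> = (if (\<forall>i\<le>length w. 0 \<le> ?h + prefix_height i w) \<and> ?h + height w = 0
        then qint q (1 + ?h) * (\<Prod>i\<in>{1..length w}. qint q (1 + ?h + prefix_height i w)) else 0)"
      using Cons.IH[of ?h] False by auto
    finally show ?thesis
      unfolding all prod by (simp add: add.assoc)
  qed
qed simp

lemma lookup_Cat:
  "lookup (Cat q n) w =
    (if length w = 2 * n \<and> catalan_word w then \<Prod>i\<le>2 * n. qint q (1 + prefix_height i w) else 0)"
proof -
  have "finite {w. length w = 2 * n \<and> catalan_word w}"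
    by (rule finite_subset[OF _ finite_words_of_length[of "2 * n"]]) auto
  then show ?thesis
    by (simp add: Cat_def lookup_sum_scal_wd prefix_height_def)
qed

lemma Cat_eq_CatH:
  assumes "q \<noteq> 0" "q * q \<noteq> 1"
  shows "Cat q n = CatH q 0 n"
proof (rule poly_mapping_eqI)
  fix w
  have "(\<Prod>i\<le>2 * n. qint q (1 + prefix_height i w)) = (\<Prod>i\<in>{1..2 * n}. qint q (1 + prefix_height i w))"
    using qint_1[OF assms] by (simp add: atMost_atLeast0 prod.atLeast_Suc_atMost[of 0])
  then show "lookup (Cat q n) w = lookup (CatH q 0 n) w"
    by (auto simp: lookup_Cat CatH_def lookup_path_sum path_weight_eq catalan_word_iff)
qed

lemma prefix_height_mirror:
  assumes "i \<le> length w"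
  shows "prefix_height i (mirror w) = prefix_height (length w - i) w - height w"
proof -
  let ?k = "length w - i"
  have "mirror w = mirror (drop ?k w) @ mirror (take ?k w)"
    by (simp flip: mirror_append)
  moreover have "length (mirror (drop ?k w)) = i"
    using assms by simp
  ultimately have "take i (mirror w) = mirror (drop ?k w)"
    by simp
  moreover have "height w = height (take ?k w) + height (drop ?k w)"
    by (simp flip: height_append)
  ultimately show ?thesis
    using assms by (simp add: prefix_height_eq_height_take)
qed

lemma catalan_word_mirror:
  assumes "catalan_word w"
  shows "catalan_word (mirror w)"
proof -
  have "\<forall>i\<le>length w. 0 \<le> prefix_height i w" "height w = 0"
    using assms by (simp_all add: catalan_word_iff)
  then show ?thesis
    by (simp add: catalan_word_iff prefix_height_mirror)
qed

lemma Cat_weight_mirror: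
  assumes "length w = m" "catalan_word w"
  shows "(\<Prod>i\<le>m. qint q (1 + prefix_height i (mirror w))) = (\<Prod>i\<le>m. qint q (1 + prefix_height i w))"
proof -
  have "height w = 0"
    using assms(2) by (simp add: catalan_word_iff)
  with assms(1) have "(\<Prod>i\<le>m. qint q (1 + prefix_height i (mirror w)))
      = (\<Prod>i\<le>m. qint q (1 + prefix_height (m - i) w))"
    by (simp add: prefix_height_mirror)
  also have "\<dots> = (\<Prod>i\<le>m. qint q (1 + prefix_height i w))"
    unfolding atMost_atLeast0 by (rule prod.atLeastAtMost_rev[of _ 0 m, simplified, symmetric])
  finally show ?thesis .
qed

lemma mirrorV_Cat: "mirrorV (Cat q n) = Cat q n"
proof -
  let ?S = "{w. length w = 2 * n \<and> catalan_word w}"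
  let ?c = "\<lambda>w. \<Prod>i\<le>2 * n. qint q (1 + prefix_height i w)"
  have Cat: "Cat q n = (\<Sum>w\<in>?S. scal (?c w) (wd w))"
    by (simp add: Cat_def prefix_height_def)
  have S: "mirror ` ?S = ?S"
    using catalan_word_mirror by (force intro: image_eqI[of _ mirror "mirror _"])
  have "mirrorV (Cat q n) = (\<Sum>w\<in>?S. scal (?c (mirror w)) (wd (mirror w)))"
    unfolding Cat by (intro trans[OF mirrorV_sum] sum.cong) (simp_all add: Cat_weight_mirror)
  also have "\<dots> = (\<Sum>w\<in>?S. scal (?c w) (wd w))"
    by (rule sym, rule sum.reindex_cong[where l = mirror]) (simp_all add: S inj_on_subset[OF inj_mirror])
  finally show ?thesis
    by (simp only: Cat)
qed

lemma Cat_inverse: "Cat (inverse q) n = Cat q n"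
  by (simp add: Cat_def qint_inverse)

section \<open>Products of path sums with the alternating words\<close>

lemma lder_star_CatH:
  "lder X (star q (CatH q h j) g) =
     star q (lder X (CatH q h j)) g + scal (inverse (q ^ h) ^ 2) (star q (CatH q h j) (lder X g))"
  "lder Y (star q (CatH q h j) g) =
     star q (lder Y (CatH q h j)) g + scal ((q ^ h) ^ 2) (star q (CatH q h j) (lder Y g))"
proof -
  have heights: "\<And>u. u \<in> keys (CatH q h j) \<Longrightarrow> height u = - int h"
    by (rule height_keys_CatH)
  have "2 * - int h * lval X = - int (h * 2)" "2 * - int h * lval Y = int (h * 2)"
    by simp_all
  then have "q powi (2 * - int h * lval X) = inverse (q ^ h) ^ 2"
    "q powi (2 * - int h * lval Y) = (q ^ h) ^ 2"
    by (simp_all only: power_int_minus power_int_of_nat power_mult power_inverse)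
  with lder_star[OF heights, where q = q and g = g]
  show "lder X (star q (CatH q h j) g) =
     star q (lder X (CatH q h j)) g + scal (inverse (q ^ h) ^ 2) (star q (CatH q h j) (lder X g))"
    "lder Y (star q (CatH q h j) g) =
     star q (lder Y (CatH q h j)) g + scal ((q ^ h) ^ 2) (star q (CatH q h j) (lder Y g))"
    by metis+
qed

lemma sum_atMost_Suc_shift_scal:
  "(\<Sum>j\<le>Suc N. scal ((- q) ^ j) (case j of 0 \<Rightarrow> 0 | Suc i \<Rightarrow> F i))
    = scal (- q) (\<Sum>i\<le>N. scal ((- q) ^ i) (F i))"
  by (simp add: sum.atMost_Suc_shift vV.scale_sum_right del: sum.atMost_Suc)

lemma sum_atMost_Suc_drop_last:
  "(\<Sum>j\<le>Suc N. scal (c j) (if j = Suc N then 0 else F j)) = (\<Sum>j\<le>N. scal (c j) (F j))"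
  by (simp add: sum.atMost_Suc)

definition Cat_star_G :: "'a::field \<Rightarrow> nat \<Rightarrow> nat \<Rightarrow> 'a vV" where
  "Cat_star_G q k N = (\<Sum>j\<le>N. scal ((- q) ^ j) (star q (CatH q k j) (Gt (N - j))))"

definition Cat_star_W :: "'a::field \<Rightarrow> nat \<Rightarrow> nat \<Rightarrow> 'a vV" where
  "Cat_star_W q k N = (\<Sum>j\<le>N. scal ((- q) ^ j) (star q (CatH q k j) (Wpos (N - j))))"

lemma lookup_Cat_star_G_Nil: "lookup (Cat_star_G q k N) [] = (if k = 0 \<and> N = 0 then 1 else 0)"
  by (simp add: Cat_star_G_def lookup_sum lookup_star_Nil lookup_CatH_Nil lookup_Gt_Nil
      if_distrib[of "(*) _"] sum.delta cong: if_cong)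

lemma lookup_Cat_star_W_Nil [simp]: "lookup (Cat_star_W q k N) [] = 0"
  by (simp add: Cat_star_W_def lookup_sum lookup_star_Nil)

lemma lder_X_Cat_star_G:
  "lder X (Cat_star_G q k 0) = 0"
  "lder X (Cat_star_G q k (Suc N)) =
     scal (- q * qint q (int k + 2)) (Cat_star_G q (Suc k) N) + scal (inverse (q ^ k) ^ 2) (Cat_star_W q k N)"
proof -
  show "lder X (Cat_star_G q k 0) = 0"
    by (simp add: Cat_star_G_def lder_star_CatH lder_X_CatH lder_X_Gt)
  have "scal ((- q) ^ j) (lder X (star q (CatH q k j) (Gt (Suc N - j))))
      = scal ((- q) ^ j) (case j of 0 \<Rightarrow> 0 | Suc i \<Rightarrow>
          scal (qint q (int k + 2)) (star q (CatH q (Suc k) i) (Gt (N - i))))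
        + scal (inverse (q ^ k) ^ 2) (scal ((- q) ^ j)
          (if j = Suc N then 0 else star q (CatH q k j) (Wpos (N - j))))" if "j \<le> Suc N" for j
    using that by (cases j) (auto simp: lder_star_CatH lder_X_CatH lder_X_Gt Suc_diff_le
        vV.scale_right_distrib mult.commute)
  then have "lder X (Cat_star_G q k (Suc N))
      = (\<Sum>j\<le>Suc N. scal ((- q) ^ j) (case j of 0 \<Rightarrow> 0 | Suc i \<Rightarrow>
          scal (qint q (int k + 2)) (star q (CatH q (Suc k) i) (Gt (N - i)))))
        + scal (inverse (q ^ k) ^ 2) (\<Sum>j\<le>Suc N. scal ((- q) ^ j)
          (if j = Suc N then 0 else star q (CatH q k j) (Wpos (N - j))))"
    by (simp add: Cat_star_G_def sum.distrib vV.scale_sum_right del: sum.atMost_Suc)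
  then show "lder X (Cat_star_G q k (Suc N)) =
     scal (- q * qint q (int k + 2)) (Cat_star_G q (Suc k) N) + scal (inverse (q ^ k) ^ 2) (Cat_star_W q k N)"
    by (simp only: sum_atMost_Suc_shift_scal sum_atMost_Suc_drop_last)
      (simp add: Cat_star_G_def Cat_star_W_def vV.scale_sum_right mult_ac)
qed

lemma lder_X_Cat_star_W:
  "lder X (Cat_star_W q k 0) = 0"
  "lder X (Cat_star_W q k (Suc N)) = scal (- q * qint q (int k + 2)) (Cat_star_W q (Suc k) N)"
proof -
  show "lder X (Cat_star_W q k 0) = 0"
    by (simp add: Cat_star_W_def lder_star_CatH lder_X_CatH)
  have "scal ((- q) ^ j) (lder X (star q (CatH q k j) (Wpos (Suc N - j))))
      = scal ((- q) ^ j) (case j of 0 \<Rightarrow> 0 | Suc i \<Rightarrow>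
          scal (qint q (int k + 2)) (star q (CatH q (Suc k) i) (Wpos (N - i))))" for j
    by (cases j) (simp_all add: lder_star_CatH lder_X_CatH)
  then have "lder X (Cat_star_W q k (Suc N))
      = (\<Sum>j\<le>Suc N. scal ((- q) ^ j) (case j of 0 \<Rightarrow> 0 | Suc i \<Rightarrow>
          scal (qint q (int k + 2)) (star q (CatH q (Suc k) i) (Wpos (N - i)))))"
    by (simp add: Cat_star_W_def del: sum.atMost_Suc)
  then show "lder X (Cat_star_W q k (Suc N)) = scal (- q * qint q (int k + 2)) (Cat_star_W q (Suc k) N)"
    by (simp only: sum_atMost_Suc_shift_scal) (simp add: Cat_star_W_def vV.scale_sum_right mult_ac)
qed

lemma lder_Y_Cat_star_G:
  "lder Y (Cat_star_G q k N) = (if k = 0 then 0 else scal (qint q (int k)) (Cat_star_G q (k - 1) N))"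
  by (simp add: Cat_star_G_def lder_star_CatH lder_Y_CatH vV.scale_sum_right mult_ac)

lemma lder_Y_Cat_star_W:
  "lder Y (Cat_star_W q k N) =
     (if k = 0 then 0 else scal (qint q (int k)) (Cat_star_W q (k - 1) N)) + scal ((q ^ k) ^ 2) (Cat_star_G q k N)"
  by (simp add: Cat_star_W_def Cat_star_G_def lder_star_CatH lder_Y_CatH vV.scale_sum_right
      vV.scale_right_distrib sum.distrib mult_ac)

lemma Cat_star_G_step_X:
  assumes q: "q \<noteq> 0" "q * q \<noteq> 1"
    and IH: "Cat_star_G q (Suc (Suc k)) N = scal (inverse (q ^ Suc k)) (Cat_star_W q (Suc k) N)"
  shows "lder X (Cat_star_G q (Suc k) (Suc N)) = lder X (scal (inverse (q ^ k)) (Cat_star_W q k (Suc N)))"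
proof -
  have "qint q (int k + 3) = inverse (q ^ (k + 2)) + q * qint q (int k + 2)"
    using qint_Suc_nat(2)[OF q, of "k + 2"] by (simp add: ac_simps)
  then have coeff: "- q * qint q (int (Suc k) + 2) * inverse (q ^ Suc k) + inverse (q ^ Suc k) ^ 2
      = inverse (q ^ k) * (- q * qint q (int k + 2))"
    using q by (simp add: field_simps power2_eq_square ac_simps)
  have "lder X (Cat_star_G q (Suc k) (Suc N))
      = scal (- q * qint q (int (Suc k) + 2)) (Cat_star_G q (Suc (Suc k)) N)
        + scal (inverse (q ^ Suc k) ^ 2) (Cat_star_W q (Suc k) N)"
    by (rule lder_X_Cat_star_G(2))
  also have "\<dots> = scal (- q * qint q (int (Suc k) + 2) * inverse (q ^ Suc k) + inverse (q ^ Suc k) ^ 2)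
      (Cat_star_W q (Suc k) N)"
    by (simp only: IH vV.scale_scale vV.scale_left_distrib)
  also have "\<dots> = lder X (scal (inverse (q ^ k)) (Cat_star_W q k (Suc N)))"
    by (simp only: coeff lder_scal lder_X_Cat_star_W(2) vV.scale_scale)
  finally show ?thesis .
qed

lemma Cat_star_G_step_Y:
  assumes q: "q \<noteq> 0" "q * q \<noteq> 1"
    and IH: "Cat_star_G q (Suc k) N = scal (inverse (q ^ k)) (Cat_star_W q k N)"
  shows "lder Y (Cat_star_G q (Suc (Suc k)) N) = lder Y (scal (inverse (q ^ Suc k)) (Cat_star_W q (Suc k) N))"
proof -
  have "qint q (int (Suc (Suc k))) = q ^ Suc k + inverse q * qint q (int (Suc k))"
    using qint_Suc_nat(1)[OF q, of "Suc k"] by simp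
  then have coeff: "qint q (int (Suc (Suc k))) * inverse (q ^ k)
      = inverse (q ^ Suc k) * qint q (int (Suc k)) + inverse (q ^ Suc k) * (q ^ Suc k) ^ 2 * inverse (q ^ k)"
    using q by (simp add: field_simps power2_eq_square)
  have "lder Y (Cat_star_G q (Suc (Suc k)) N) = scal (qint q (int (Suc (Suc k)))) (Cat_star_G q (Suc k) N)"
    by (simp add: lder_Y_Cat_star_G)
  also have "\<dots> = scal (qint q (int (Suc (Suc k))) * inverse (q ^ k)) (Cat_star_W q k N)"
    by (simp only: IH vV.scale_scale)
  also have "\<dots> = lder Y (scal (inverse (q ^ Suc k)) (Cat_star_W q (Suc k) N))"
    by (simp only: coeff lder_scal lder_Y_Cat_star_W IH vV.scale_scale vV.scale_left_distrib
        vV.scale_right_distrib nat.distinct if_False diff_Suc_1 mult.assoc)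
  finally show ?thesis .
qed

lemma Cat_star_G_Suc_eq_if_lder_X:
  assumes q: "q \<noteq> 0" "q * q \<noteq> 1"
    and lder_X: "\<And>k. lder X (Cat_star_G q (Suc k) N) = lder X (scal (inverse (q ^ k)) (Cat_star_W q k N))"
  shows "Cat_star_G q (Suc k) N = scal (inverse (q ^ k)) (Cat_star_W q k N)"
proof (induction k)
  case 0
  show ?case
    by (rule vV_eqI_lder)
      (simp_all add: lookup_Cat_star_G_Nil lder_X lder_Y_Cat_star_G lder_Y_Cat_star_W qint_1[OF q])
next
  case (Suc k)
  show ?case
    by (rule vV_eqI_lder) (simp_all only: lookup_Cat_star_G_Nil lookup_scal lookup_Cat_star_W_Nil
        lder_X Cat_star_G_step_Y[OF q Suc.IH] nat.distinct simp_thms if_False mult_zero_right)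
qed

lemma Cat_star_G_Suc:
  assumes q: "q \<noteq> 0" "q * q \<noteq> 1"
  shows "Cat_star_G q (Suc k) N = scal (inverse (q ^ k)) (Cat_star_W q k N)"
proof (induction N arbitrary: k)
  case 0
  show ?case
    by (rule Cat_star_G_Suc_eq_if_lder_X[OF q]) (simp add: lder_X_Cat_star_G lder_X_Cat_star_W)
next
  case (Suc N)
  show ?case
    by (rule Cat_star_G_Suc_eq_if_lder_X[OF q]) (rule Cat_star_G_step_X[OF q Suc.IH])
qed

lemma lder_star_pref_X_CatH:
  "lder X (star q (pref X (CatH q 0 i)) g) =
     star q (CatH q 0 i) g + scal (q ^ 2) (star q (pref X (CatH q 0 i)) (lder X g))"
  "lder Y (star q (pref X (CatH q 0 i)) g) =
     scal (inverse q ^ 2) (star q (pref X (CatH q 0 i)) (lder Y g))"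
proof -
  have "u \<in> keys (pref X (CatH q 0 i)) \<Longrightarrow> height u = 1" for u
    by (auto simp: keys_pref dest: height_keys_CatH)
  from lder_star[OF this, where q = q and g = g]
  show "lder X (star q (pref X (CatH q 0 i)) g) =
     star q (CatH q 0 i) g + scal (q ^ 2) (star q (pref X (CatH q 0 i)) (lder X g))"
    "lder Y (star q (pref X (CatH q 0 i)) g) =
     scal (inverse q ^ 2) (star q (pref X (CatH q 0 i)) (lder Y g))"
    by (simp_all add: power_int_minus power_inverse)
qed

text \<open>The right-hand side of the first expansion, with \<open>C\<^sub>i\<close> in the form \<open>CatH q 0 i\<close>.\<close>

definition xCat_star_G :: "'a::field \<Rightarrow> nat \<Rightarrow> 'a vV" where
  "xCat_star_G q n = (\<Sum>i\<le>n. scal ((- q) ^ i) (star q (pref X (CatH q 0 i)) (Gt (n - i))))"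

definition xCat_star_W :: "'a::field \<Rightarrow> nat \<Rightarrow> 'a vV" where
  "xCat_star_W q n = (\<Sum>i\<le>n. scal ((- q) ^ i) (star q (pref X (CatH q 0 i)) (Wpos (n - i))))"

lemma lookup_xCat_star_G_Nil [simp]: "lookup (xCat_star_G q n) [] = 0"
  by (simp add: xCat_star_G_def lookup_sum lookup_star_Nil)

lemma lookup_xCat_star_W_Nil [simp]: "lookup (xCat_star_W q n) [] = 0"
  by (simp add: xCat_star_W_def lookup_sum lookup_star_Nil)

lemma lder_xCat_star_G:
  "lder X (xCat_star_G q (Suc m)) = Cat_star_G q 0 (Suc m) + scal (q ^ 2) (xCat_star_W q m)"
  "lder Y (xCat_star_G q n) = 0"
proof -
  let ?W = "\<Sum>i\<le>Suc m. scal ((- q) ^ i) (star q (pref X (CatH q 0 i)) (lder X (Gt (Suc m - i))))"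
  have "lder X (xCat_star_G q (Suc m)) = Cat_star_G q 0 (Suc m) + scal (q ^ 2) ?W"
    by (simp add: xCat_star_G_def Cat_star_G_def lder_star_pref_X_CatH vV.scale_right_distrib
        sum.distrib vV.scale_sum_right mult_ac del: sum.atMost_Suc)
  also have "?W = xCat_star_W q m"
    unfolding xCat_star_W_def lder_X_Gt
    by (rule trans[OF _ sum_atMost_Suc_drop_last]) (intro sum.cong; simp add: Suc_diff_le)
  finally show "lder X (xCat_star_G q (Suc m)) = Cat_star_G q 0 (Suc m) + scal (q ^ 2) (xCat_star_W q m)" .
  show "lder Y (xCat_star_G q n) = 0"
    by (simp add: xCat_star_G_def lder_star_pref_X_CatH)
qed

lemma lder_xCat_star_W:
  "lder X (xCat_star_W q m) = Cat_star_W q 0 m"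
  "lder Y (xCat_star_W q m) = scal (inverse q ^ 2) (xCat_star_G q m)"
  by (simp_all add: xCat_star_W_def xCat_star_G_def Cat_star_W_def lder_star_pref_X_CatH
      vV.scale_sum_right mult_ac)

lemma xCat_star_G_eq_Wneg:
  assumes q: "q \<noteq> 0" "q * q \<noteq> 1"
  shows "xCat_star_G q n = Wneg n"
proof (induction n)
  case 0
  show ?case
    by (simp add: xCat_star_G_def Gt_def Wneg_0)
next
  case (Suc m)
  have "qint q 2 = q + inverse q"
    using qint_Suc_nat(1)[OF q, of 1] qint_1[OF q] by simp
  then have coeff: "- q * qint q 2 + 1 + q ^ 2 = 0"
    using q(1) by (simp add: field_simps power2_eq_square)
  have "lder X (Cat_star_G q 0 (Suc m) + scal (q ^ 2) (xCat_star_W q m))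
      = scal (- q * qint q 2) (Cat_star_W q 0 m) + Cat_star_W q 0 m + scal (q ^ 2) (Cat_star_W q 0 m)"
    by (simp only: lder_add lder_scal lder_X_Cat_star_G(2) lder_xCat_star_W(1) Cat_star_G_Suc[OF q]
        vV.scale_scale power_0 inverse_1 mult_1_right one_power2 vV.scale_one of_nat_0 add_0)
  also have "\<dots> = scal (- q * qint q 2 + 1 + q ^ 2) (Cat_star_W q 0 m)"
    by (simp only: vV.scale_left_distrib vV.scale_one)
  finally have lder_X: "lder X (Cat_star_G q 0 (Suc m) + scal (q ^ 2) (xCat_star_W q m)) = 0"
    by (simp only: coeff vV.scale_zero_left)
  have lder_Y: "lder Y (Cat_star_G q 0 (Suc m) + scal (q ^ 2) (xCat_star_W q m)) = Wneg m"
  proof -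
    have "q ^ 2 * inverse q ^ 2 = 1"
      using q(1) by (simp flip: power_mult_distrib)
    then show ?thesis
      by (simp only: lder_add lder_scal lder_Y_Cat_star_G lder_xCat_star_W(2) refl if_True
          add_0 vV.scale_scale vV.scale_one Suc.IH simp_thms)
  qed
  have "Cat_star_G q 0 (Suc m) + scal (q ^ 2) (xCat_star_W q m) = pref Y (Wneg m)"
    by (rule vV_eqI_lder) (simp_all only: lder_X lder_Y lder_pref lookup_pref_Nil lookup_add
        lookup_scal lookup_Cat_star_G_Nil lookup_xCat_star_W_Nil letter.distinct nat.distinct
        simp_thms if_True if_False mult_zero_right add_0)
  then have "lder X (xCat_star_G q (Suc m)) = lder X (Wneg (Suc m))"
    by (simp only: lder_xCat_star_G Wneg_Suc lder_pref simp_thms if_True)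
  then show ?case
    by (rule vV_eqI_lder[rotated]) (simp_all only: lder_xCat_star_G Wneg_Suc lder_pref
        lookup_xCat_star_G_Nil lookup_pref_Nil letter.distinct simp_thms if_False)
qed

lemma Wneg_expansion:
  assumes "q \<noteq> 0" "q * q \<noteq> 1"
  shows "Wneg n = (\<Sum>i\<le>n. scal ((-1) ^ i * q ^ i) (star q (cat (wd [X]) (Cat q i)) (Gt (n - i))))"
proof -
  have "(- q) ^ i = (-1) ^ i * q ^ i" for i
    by (rule power_minus)
  then show ?thesis
    using xCat_star_G_eq_Wneg[OF assms, of n]
    by (simp add: xCat_star_G_def Cat_eq_CatH[OF assms] pref_def)
qed

lemma Wpos_expansion:
  assumes "q \<noteq> 0" "q * q \<noteq> 1"
  shows "Wpos n = (\<Sum>i\<le>n. scal ((-1) ^ i * q ^ i) (star q (Gt (n - i)) (cat (Cat q i) (wd [Y]))))"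
  using arg_cong[OF Wneg_expansion[OF assms, of n], of mirrorV]
  by (simp add: mirrorV_star[OF assms(1)] mirrorV_cat mirrorV_Cat)

lemma star_inverse_Gt:
  assumes "q \<noteq> 0"
  shows "star (inverse q) f (Gt m) = star q (Gt m) f"
    and "star (inverse q) (Gt m) f = star q f (Gt m)"
  using star_commute_inverse[of "inverse q" f "Gt m" 0] star_commute_inverse[of "inverse q" "Gt m" f 0] assms
  by (simp_all add: height_keys_Gt)

theorem theorem11p5:
  fixes q :: "'a::field" and n :: nat
  assumes "q \<noteq> 0"
    and "\<And>m::nat. m \<ge> 1 \<Longrightarrow> q ^ m \<noteq> 1"
  shows "(Wneg n = (\<Sum>i\<le>n. scal ((-1) ^ i * q ^ i)
                     (star q (cat (wd [X]) (Cat q i)) (Gt (n - i)))))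
    \<and> (Wneg n = (\<Sum>i\<le>n. scal ((-1) ^ i * q powi (- int i))
                     (star q (Gt (n - i)) (cat (wd [X]) (Cat q i)))))
    \<and> (Wpos n = (\<Sum>i\<le>n. scal ((-1) ^ i * q ^ i)
                     (star q (Gt (n - i)) (cat (Cat q i) (wd [Y])))))
    \<and> (Wpos n = (\<Sum>i\<le>n. scal ((-1) ^ i * q powi (- int i))
                     (star q (cat (Cat q i) (wd [Y])) (Gt (n - i)))))"
proof -
  have q2: "q * q \<noteq> 1"
    using assms(2)[of 2] by (simp add: power2_eq_square)
  have inv_q: "inverse q \<noteq> 0" "inverse q * inverse q \<noteq> 1"
    using assms(1) q2 by (simp, metis inverse_eq_1_iff inverse_mult_distrib)
  have pow: "inverse q ^ i = q powi (- int i)" for i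
    by (simp only: power_int_minus power_int_of_nat power_inverse)
  have "Wneg n = (\<Sum>i\<le>n. scal ((-1) ^ i * q powi (- int i))
                     (star q (Gt (n - i)) (cat (wd [X]) (Cat q i))))"
    using Wneg_expansion[OF inv_q, of n] by (simp only: pow Cat_inverse star_inverse_Gt[OF assms(1)])
  moreover have "Wpos n = (\<Sum>i\<le>n. scal ((-1) ^ i * q powi (- int i))
                     (star q (cat (Cat q i) (wd [Y])) (Gt (n - i))))"
    using Wpos_expansion[OF inv_q, of n] by (simp only: pow Cat_inverse star_inverse_Gt[OF assms(1)])
  ultimately show ?thesis
    using Wneg_expansion[OF assms(1) q2] Wpos_expansion[OF assms(1) q2] by blast
qed

end
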